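(* Let $R$ be a commutative ring. Let $0\to P\xrightarrow{f}F\xrightarrow{g}M\to 0$ be a $w$-split exact sequence of $R$-modules, with fixed $J=\langle d_1,\dots,d_n\rangle\in\mathrm{GV}(R)$ and $h_1,\dots,h_n\in\mathrm{Hom}_R(M,F)$ satisfying $gh_k=\eta^M_{d_k}$. Suppose $F=\bigoplus_{i\in I}F_i$ with each $F_i$ a projective submodule. Let $\mathcal S_1$ be a set of subsets of $I$, totally ordered by inclusion, such that $h_k(M(H_s))\subseteq F(H_s)$ for every $H_s\in\mathcal S_1$ and every $k=1,\dots,n$. Put $H=\bigcup_{H_s\in\mathcal S_1}H_s$. Then: (1) $\bigcup_{H_s\in\mathcal S_1}F(H_s)=F(H)$, which is therefore projective. Moreover, $\bigcup_{H_s\in\mathcal S_1}P(H_s)=P(H)$ and $\bigcup_{H_s\in\mathcal S_1}M(H_s)=M(H)$. (2) $h_k(M(H))\subseteq F(H)$ for all $k=1,\dots,n$. Hence the exact sequence $0\to P(H)\xrightarrow{f|_{P(H)}}F(H)\xrightarrow{g|_{F(H)}}M(H)\to 0$ is $w$-split (witnessed by $J$ and the restrictions of the $h_k$).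
   Context: $R$ is a commutative ring with identity. For an $R$-module $X$ and $s\in R$, $\eta^X_s$ is multiplication by $s$. An ideal $J$ is a GV-ideal if $J$ is finitely generated and the natural map $R\to\mathrm{Hom}_R(J,R)$ is an isomorphism; $\mathrm{GV}(R)$ is the set of GV-ideals. A short exact sequence $0\to A\xrightarrow{f}B\xrightarrow{g}C\to 0$ is $w$-split if there exist $J=\langle d_1,\dots,d_n\rangle\in\mathrm{GV}(R)$ and $h_k\in\mathrm{Hom}_R(C,B)$ with $gh_k=\eta^C_{d_k}$ for all $k$. Notation: for $H\subseteq I$ nonempty, $F(H)=\bigoplus_{j\in H}F_j$, $M(H)=g(F(H))$ and $P(H)=f^{-1}(\ker(g|_{F(H)}))$. For $H=\emptyset$, $F(H)=P(H)=M(H)=0$. *)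

theory Defs
  imports Main "HOL.Modules"
begin

definition lin_on :: "('r \<Rightarrow> 'a::ab_group_add \<Rightarrow> 'a) \<Rightarrow> ('r \<Rightarrow> 'b::ab_group_add \<Rightarrow> 'b) \<Rightarrow> 'a set \<Rightarrow> 'b set \<Rightarrow> ('a \<Rightarrow> 'b) \<Rightarrow> bool" where
  "lin_on sA sB A B h \<longleftrightarrow> (\<forall>x\<in>A. h x \<in> B) \<and>
     (\<forall>x\<in>A. \<forall>y\<in>A. h (x + y) = h x + h y) \<and>
     (\<forall>r. \<forall>x\<in>A. h (sA r x) = sB r (h x))"

definition gen_ideal :: "nat \<Rightarrow> (nat \<Rightarrow> 'r::comm_ring_1) \<Rightarrow> 'r set" where
  "gen_ideal n d = {\<Sum>k<n. a k * d k | a. True}"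

text \<open>GV-ideal: finitely generated J such that the natural map R \<rightarrow> Hom_R(J,R),
  r \<mapsto> (x \<mapsto> r x), is an isomorphism (injective and surjective).\<close>
definition GV_ideal :: "nat \<Rightarrow> (nat \<Rightarrow> 'r::comm_ring_1) \<Rightarrow> bool" where
  "GV_ideal n d \<longleftrightarrow>
     (\<forall>r. (\<forall>x\<in>gen_ideal n d. r * x = 0) \<longrightarrow> r = 0) \<and>
     (\<forall>\<phi>. lin_on (*) (*) (gen_ideal n d) UNIV \<phi> \<longrightarrow> (\<exists>r. \<forall>x\<in>gen_ideal n d. \<phi> x = r * x))"

definition exact_ses where
  "exact_ses sA sB sC A B C f g \<longleftrightarrow>
     lin_on sA sB A B f \<and> lin_on sB sC B C g \<and> inj_on f A \<and> g ` B = C \<and>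
     {x \<in> B. g x = 0} = f ` A"

definition w_split_via where
  "w_split_via sA sB sC A B C f g n d h \<longleftrightarrow>
     exact_ses sA sB sC A B C f g \<and> GV_ideal n d \<and>
     (\<forall>k<n. lin_on sC sB C B (h k) \<and> (\<forall>x\<in>C. g (h k x) = sC (d k) x))"

text \<open>Projectivity (lifting property) of a submodule A, tested against modules
  whose carriers live in the types 'x and 'y.\<close>
definition projective ::
  "'x::ab_group_add itself \<Rightarrow> 'y::ab_group_add itself \<Rightarrow> ('r::comm_ring_1 \<Rightarrow> 'a \<Rightarrow> 'a) \<Rightarrow> 'a::ab_group_add set \<Rightarrow> bool" where
  "projective _ _ sA A \<longleftrightarrow>
     (\<forall>(sX :: 'r \<Rightarrow> 'x \<Rightarrow> 'x) (sY :: 'r \<Rightarrow> 'y \<Rightarrow> 'y) X Y p \<phi>.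
        module sX \<and> module sY \<and> module.subspace sX X \<and> module.subspace sY Y \<and>
        lin_on sX sY X Y p \<and> p ` X = Y \<and> lin_on sA sY A Y \<phi> \<longrightarrow>
        (\<exists>\<psi>. lin_on sA sX A X \<psi> \<and> (\<forall>a\<in>A. p (\<psi> a) = \<phi> a)))"

definition Fsum :: "('i \<Rightarrow> 'f::ab_group_add set) \<Rightarrow> 'i set \<Rightarrow> 'f set" where
  "Fsum F H = {\<Sum>i\<in>S. x i | S x. finite S \<and> S \<subseteq> H \<and> (\<forall>i\<in>S. x i \<in> F i)}"

definition Msub :: "('f \<Rightarrow> 'm) \<Rightarrow> ('i \<Rightarrow> 'f::ab_group_add set) \<Rightarrow> 'i set \<Rightarrow> 'm set" where
  "Msub g F H = g ` Fsum F H"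

definition Psub :: "('p \<Rightarrow> 'f) \<Rightarrow> ('f \<Rightarrow> 'm::zero) \<Rightarrow> ('i \<Rightarrow> 'f::ab_group_add set) \<Rightarrow> 'i set \<Rightarrow> 'p set" where
  "Psub f g F H = f -` {x \<in> Fsum F H. g x = 0}"

definition internal_direct_sum :: "('r::comm_ring_1 \<Rightarrow> 'f \<Rightarrow> 'f) \<Rightarrow> ('i \<Rightarrow> 'f::ab_group_add set) \<Rightarrow> 'i set \<Rightarrow> bool" where
  "internal_direct_sum sF F I \<longleftrightarrow>
     (\<forall>i\<in>I. module.subspace sF (F i)) \<and> Fsum F I = UNIV \<and>
     (\<forall>S x. finite S \<and> S \<subseteq> I \<and> (\<forall>i\<in>S. x i \<in> F i) \<and> (\<Sum>i\<in>S. x i) = 0 \<longrightarrow> (\<forall>i\<in>S. x i = 0))"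

end

theory Submission
  imports Defs
begin

text \<open>Exactness and the w-splitting maps restrict to F(H) as soon as every \<open>h k\<close> maps
  M(H) into F(H). Along a chain of such H the sets F(H), M(H), P(H) are directed unions,
  because an element of F(\<Union>S1) involves only finitely many summands. Projectivity of F(H)
  is that of a direct sum of projectives: liftings of the summands are added up, which is
  well defined since decompositions in an internal direct sum are unique.\<close>

definition Fsum_repr :: "('i \<Rightarrow> 'f::ab_group_add set) \<Rightarrow> 'i set \<Rightarrow> 'i set \<Rightarrow> ('i \<Rightarrow> 'f) \<Rightarrow> 'f \<Rightarrow> bool" where
  "Fsum_repr Fi H S c x \<longleftrightarrow> finite S \<and> S \<subseteq> H \<and> (\<forall>i\<in>S. c i \<in> Fi i) \<and> x = sum c S"

lemma Fsum_reprD: "Fsum_repr Fi H S c x \<Longrightarrow> i \<in> S \<Longrightarrow> i \<in> H \<and> c i \<in> Fi i"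
  unfolding Fsum_repr_def by blast

lemma Fsum_iff_repr: "x \<in> Fsum Fi H \<longleftrightarrow> (\<exists>S c. Fsum_repr Fi H S c x)"
  unfolding Fsum_def Fsum_repr_def by blast

lemma Fsum_mono: "H \<subseteq> H' \<Longrightarrow> Fsum Fi H \<subseteq> Fsum Fi H'"
  unfolding Fsum_def by blast

lemma Fi_subset_Fsum:
  assumes "i \<in> H"
  shows "Fi i \<subseteq> Fsum Fi H"
proof
  fix x assume "x \<in> Fi i"
  then have "Fsum_repr Fi H {i} (\<lambda>_. x) x"
    using assms by (simp add: Fsum_repr_def)
  then show "x \<in> Fsum Fi H"
    unfolding Fsum_iff_repr by blast
qed

lemma Fsum_Union_chain:
  assumes "S1 \<noteq> {}" and "\<forall>A\<in>S1. \<forall>B\<in>S1. A \<subseteq> B \<or> B \<subseteq> A"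
  shows "(\<Union>H\<in>S1. Fsum Fi H) = Fsum Fi (\<Union>S1)"
proof
  show "(\<Union>H\<in>S1. Fsum Fi H) \<subseteq> Fsum Fi (\<Union>S1)"
    using Fsum_mono[of _ "\<Union>S1" Fi] by blast
next
  have chain: "subset.chain S1 S1"
    using assms(2) by (simp add: subset_chain_def)
  show "Fsum Fi (\<Union>S1) \<subseteq> (\<Union>H\<in>S1. Fsum Fi H)"
  proof
    fix x assume "x \<in> Fsum Fi (\<Union>S1)"
    then obtain S c where S: "finite S" "S \<subseteq> \<Union>S1" "\<forall>i\<in>S. c i \<in> Fi i" "x = sum c S"
      unfolding Fsum_def by blast
    obtain B where "B \<in> S1" "S \<subseteq> B"
      using finite_subset_Union_chain[OF S(1,2) assms(1) chain] by blast
    moreover have "x \<in> Fsum Fi B"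
      using S calculation unfolding Fsum_def by blast
    ultimately show "x \<in> (\<Union>H\<in>S1. Fsum Fi H)" by blast
  qed
qed

lemma Psub_Union_chain:
  assumes "S1 \<noteq> {}" and "\<forall>A\<in>S1. \<forall>B\<in>S1. A \<subseteq> B \<or> B \<subseteq> A"
  shows "(\<Union>H\<in>S1. Psub f g Fi H) = Psub f g Fi (\<Union>S1)"
  using Fsum_Union_chain[OF assms, of Fi] unfolding Psub_def by blast

lemma Msub_Union_chain:
  assumes "S1 \<noteq> {}" and "\<forall>A\<in>S1. \<forall>B\<in>S1. A \<subseteq> B \<or> B \<subseteq> A"
  shows "(\<Union>H\<in>S1. Msub g Fi H) = Msub g Fi (\<Union>S1)"
  using Fsum_Union_chain[OF assms, of Fi] unfolding Msub_def by blast

lemma image_Msub_Union_chain: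
  assumes "S1 \<noteq> {}" and "\<forall>A\<in>S1. \<forall>B\<in>S1. A \<subseteq> B \<or> B \<subseteq> A"
    and inv: "\<forall>H\<in>S1. h ` Msub g Fi H \<subseteq> Fsum Fi H"
  shows "h ` Msub g Fi (\<Union>S1) \<subseteq> Fsum Fi (\<Union>S1)"
proof -
  have "h ` Msub g Fi H \<subseteq> Fsum Fi (\<Union>S1)" if "H \<in> S1" for H
    using inv that Fsum_mono[OF Union_upper[OF that]] by blast
  then show ?thesis
    unfolding Msub_Union_chain[OF assms(1,2), symmetric] image_UN by (rule UN_least)
qed

lemma Fsum_repr_pad:
  assumes "Fsum_repr Fi H S c x" "finite U" "S \<subseteq> U" "U \<subseteq> H" "\<forall>i\<in>U. 0 \<in> Fi i"
  shows "Fsum_repr Fi H U (\<lambda>i. if i \<in> S then c i else 0) x"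
  using assms sum.inter_restrict[OF assms(2), of c S]
  by (auto simp: Fsum_repr_def Int_absorb1)

lemma Fsum_repr_common:
  assumes "Fsum_repr Fi H S c x" "Fsum_repr Fi H T e y" "\<forall>i\<in>H. 0 \<in> Fi i"
  shows "Fsum_repr Fi H (S \<union> T) (\<lambda>i. if i \<in> S then c i else 0) x"
    and "Fsum_repr Fi H (S \<union> T) (\<lambda>i. if i \<in> T then e i else 0) y"
proof -
  have "finite (S \<union> T)" "S \<union> T \<subseteq> H"
    using assms(1,2) by (auto simp: Fsum_repr_def)
  then show "Fsum_repr Fi H (S \<union> T) (\<lambda>i. if i \<in> S then c i else 0) x"
    and "Fsum_repr Fi H (S \<union> T) (\<lambda>i. if i \<in> T then e i else 0) y"
    using assms by (auto intro!: Fsum_repr_pad)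
qed

lemma lin_on_zero: "lin_on sA sB A B h \<Longrightarrow> 0 \<in> A \<Longrightarrow> h 0 = 0"
  unfolding lin_on_def by (metis add.right_neutral add_left_cancel)

lemma lin_on_mem: "lin_on sA sB A B h \<Longrightarrow> x \<in> A \<Longrightarrow> h x \<in> B"
  unfolding lin_on_def by blast

lemma lin_on_add: "lin_on sA sB A B h \<Longrightarrow> x \<in> A \<Longrightarrow> y \<in> A \<Longrightarrow> h (x + y) = h x + h y"
  unfolding lin_on_def by blast

lemma lin_on_scale: "lin_on sA sB A B h \<Longrightarrow> x \<in> A \<Longrightarrow> h (sA r x) = sB r (h x)"
  unfolding lin_on_def by blast

lemma (in module) lin_on_sum:
  assumes "subspace A" "lin_on scale sB A B h" "finite S" "\<forall>i\<in>S. c i \<in> A"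
  shows "h (sum c S) = (\<Sum>i\<in>S. h (c i))"
  using assms(3,4)
proof (induction S rule: finite_induct)
  case empty
  show ?case using lin_on_zero[OF assms(2)] subspace_0[OF assms(1)] by simp
next
  case (insert i S)
  then have "sum c S \<in> A" by (intro subspace_sum[OF assms(1)]) auto
  with insert assms(2) show ?case unfolding lin_on_def by simp
qed

context module
begin

lemma Fsum_repr_add:
  assumes "\<forall>i\<in>H. subspace (Fi i)" "Fsum_repr Fi H U c x" "Fsum_repr Fi H U e y"
  shows "Fsum_repr Fi H U (\<lambda>i. c i + e i) (x + y)"
  using assms unfolding Fsum_repr_def by (auto simp: sum.distrib intro!: subspace_add)

lemma Fsum_repr_scale:
  assumes "\<forall>i\<in>H. subspace (Fi i)" "Fsum_repr Fi H U c x"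
  shows "Fsum_repr Fi H U (\<lambda>i. scale r (c i)) (scale r x)"
  using assms unfolding Fsum_repr_def by (auto simp: scale_sum_right intro!: subspace_scale)

lemma subspace_Fsum:
  assumes "\<forall>i\<in>H. subspace (Fi i)"
  shows "subspace (Fsum Fi H)"
  unfolding subspace_def
proof (intro conjI ballI allI)
  show "0 \<in> Fsum Fi H"
    unfolding Fsum_iff_repr Fsum_repr_def by (rule exI[of _ "{}"]) auto
  fix x y r assume x: "x \<in> Fsum Fi H" and y: "y \<in> Fsum Fi H"
  obtain S c where c: "Fsum_repr Fi H S c x" using x by (auto simp: Fsum_iff_repr)
  obtain T e where e: "Fsum_repr Fi H T e y" using y by (auto simp: Fsum_iff_repr)
  show "scale r x \<in> Fsum Fi H"
    using Fsum_repr_scale[OF assms c] unfolding Fsum_iff_repr by blast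
  have "\<forall>i\<in>H. 0 \<in> Fi i" using assms subspace_0 by blast
  then show "x + y \<in> Fsum Fi H"
    using Fsum_repr_add[OF assms Fsum_repr_common[OF c e]] unfolding Fsum_iff_repr by blast
qed

end

locale independent_family = module scale
  for scale :: "'r::comm_ring_1 \<Rightarrow> 'f::ab_group_add \<Rightarrow> 'f" +
  fixes Fi :: "'i \<Rightarrow> 'f set" and H :: "'i set"
  assumes subspace_Fi: "i \<in> H \<Longrightarrow> subspace (Fi i)"
    and repr_zero: "Fsum_repr Fi H S c 0 \<Longrightarrow> i \<in> S \<Longrightarrow> c i = 0"

lemma independent_family_if_internal_direct_sum:
  assumes "module sF" "internal_direct_sum sF Fi I" "H \<subseteq> I"
  shows "independent_family sF Fi H"
proof -
  have "\<forall>i\<in>I. module.subspace sF (Fi i)"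
    and indep: "\<And>S c. finite S \<Longrightarrow> S \<subseteq> I \<Longrightarrow> \<forall>i\<in>S. c i \<in> Fi i \<Longrightarrow> sum c S = 0 \<Longrightarrow> \<forall>i\<in>S. c i = 0"
    using assms(2) unfolding internal_direct_sum_def by blast+
  show ?thesis
  proof (rule independent_family.intro[OF assms(1) independent_family_axioms.intro])
    show "i \<in> H \<Longrightarrow> module.subspace sF (Fi i)" for i
      using \<open>\<forall>i\<in>I. module.subspace sF (Fi i)\<close> assms(3) by blast
    show "c i = 0" if "Fsum_repr Fi H S c 0" "i \<in> S" for S c i
    proof -
      have "finite S" "S \<subseteq> I" "\<forall>i\<in>S. c i \<in> Fi i" "sum c S = 0"
        using that(1) assms(3) unfolding Fsum_repr_def by auto
      then show ?thesis using indep that(2) by blast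
    qed
  qed
qed

definition Fsum_map :: "('i \<Rightarrow> 'f::ab_group_add set) \<Rightarrow> 'i set \<Rightarrow> ('i \<Rightarrow> 'f \<Rightarrow> 'x::comm_monoid_add) \<Rightarrow> 'f \<Rightarrow> 'x" where
  "Fsum_map Fi H \<Psi> x = (SOME v. \<exists>S c. Fsum_repr Fi H S c x \<and> v = (\<Sum>i\<in>S. \<Psi> i (c i)))"

context independent_family
begin

lemma subspace_Fi_all: "\<forall>i\<in>H. subspace (Fi i)"
  using subspace_Fi by blast

lemma zero_Fi: "\<forall>i\<in>H. 0 \<in> Fi i"
  using subspace_Fi subspace_0 by blast

lemma subspace_Fsum_family: "subspace (Fsum Fi H)"
  using subspace_Fsum subspace_Fi_all .

lemma Fsum_repr_unique:
  assumes "Fsum_repr Fi H U c x" "Fsum_repr Fi H U e x" "i \<in> U"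
  shows "c i = e i"
proof -
  have "Fsum_repr Fi H U (\<lambda>j. c j - e j) 0"
    using assms subspace_Fi subspace_diff by (auto simp: Fsum_repr_def sum_subtractf)
  then show ?thesis using repr_zero assms(3) by fastforce
qed

lemma sum_over_Fsum_repr_eq:
  assumes \<Psi>0: "\<forall>i\<in>H. \<Psi> i 0 = 0"
    and c: "Fsum_repr Fi H S c x" and e: "Fsum_repr Fi H T e x"
  shows "(\<Sum>i\<in>S. \<Psi> i (c i)) = (\<Sum>i\<in>T. \<Psi> i (e i))"
proof -
  let ?c = "\<lambda>i. if i \<in> S then c i else 0" and ?e = "\<lambda>i. if i \<in> T then e i else 0"
  have fin: "finite (S \<union> T)" "S \<union> T \<subseteq> H"
    using c e by (auto simp: Fsum_repr_def)
  have pad: "(\<Sum>i\<in>S \<union> T. \<Psi> i (if i \<in> A then a i else 0)) = (\<Sum>i\<in>A. \<Psi> i (a i))"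
    if "A \<subseteq> S \<union> T" for A a
  proof -
    have "(\<Sum>i\<in>S \<union> T. \<Psi> i (if i \<in> A then a i else 0))
        = (\<Sum>i\<in>S \<union> T. if i \<in> A then \<Psi> i (a i) else 0)"
      using \<Psi>0 fin(2) by (intro sum.cong) auto
    also have "\<dots> = (\<Sum>i\<in>A. \<Psi> i (a i))"
      using sum.inter_restrict[OF fin(1), of "\<lambda>i. \<Psi> i (a i)" A] that
      by (simp add: Int_absorb1)
    finally show ?thesis .
  qed
  have "\<forall>i\<in>S \<union> T. ?c i = ?e i"
    using Fsum_repr_unique Fsum_repr_common[OF c e zero_Fi] by blast
  then have "(\<Sum>i\<in>S \<union> T. \<Psi> i (?c i)) = (\<Sum>i\<in>S \<union> T. \<Psi> i (?e i))"
    by (intro sum.cong) auto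
  then show ?thesis using pad by simp
qed

lemma Fsum_map_eq:
  assumes "\<forall>i\<in>H. \<Psi> i 0 = 0" "Fsum_repr Fi H S c x"
  shows "Fsum_map Fi H \<Psi> x = (\<Sum>i\<in>S. \<Psi> i (c i))"
proof -
  have "\<exists>v S c. Fsum_repr Fi H S c x \<and> v = (\<Sum>i\<in>S. \<Psi> i (c i))"
    using assms(2) by blast
  from someI_ex[OF this] obtain S' c' where
    "Fsum_repr Fi H S' c' x" "Fsum_map Fi H \<Psi> x = (\<Sum>i\<in>S'. \<Psi> i (c' i))"
    unfolding Fsum_map_def by blast
  then show ?thesis using sum_over_Fsum_repr_eq[of \<Psi>, OF assms(1)] assms(2) by metis
qed

lemma lin_on_Fsum_map:
  assumes "module sX" "module.subspace sX X" and \<Psi>: "\<forall>i\<in>H. lin_on scale sX (Fi i) X (\<Psi> i)"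
  shows "lin_on scale sX (Fsum Fi H) X (Fsum_map Fi H \<Psi>)"
  unfolding lin_on_def
proof (intro conjI ballI allI)
  have \<Psi>0: "\<forall>i\<in>H. \<Psi> i 0 = 0"
    using \<Psi> zero_Fi lin_on_zero[of scale sX "Fi i" X "\<Psi> i" for i] by blast
  fix x y r assume x: "x \<in> Fsum Fi H" and y: "y \<in> Fsum Fi H"
  obtain S c where c: "Fsum_repr Fi H S c x" using x by (auto simp: Fsum_iff_repr)
  obtain T e where e: "Fsum_repr Fi H T e y" using y by (auto simp: Fsum_iff_repr)
  have "\<Psi> i (c i) \<in> X" if "i \<in> S" for i
    using \<Psi> Fsum_reprD[OF c that] lin_on_mem[of scale sX "Fi i" X "\<Psi> i"] by blast
  then show "Fsum_map Fi H \<Psi> x \<in> X"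
    unfolding Fsum_map_eq[of \<Psi>, OF \<Psi>0 c] by (rule module.subspace_sum[OF assms(1,2)])
  have "Fsum_map Fi H \<Psi> (scale r x) = (\<Sum>i\<in>S. \<Psi> i (scale r (c i)))"
    using Fsum_map_eq[of \<Psi>, OF \<Psi>0 Fsum_repr_scale[OF subspace_Fi_all c]] .
  also have "\<dots> = (\<Sum>i\<in>S. sX r (\<Psi> i (c i)))"
  proof (rule sum.cong[OF refl])
    fix i assume "i \<in> S"
    then have "lin_on scale sX (Fi i) X (\<Psi> i)" "c i \<in> Fi i"
      using \<Psi> Fsum_reprD[OF c] by blast+
    then show "\<Psi> i (scale r (c i)) = sX r (\<Psi> i (c i))" by (rule lin_on_scale)
  qed
  also have "\<dots> = sX r (Fsum_map Fi H \<Psi> x)"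
    unfolding Fsum_map_eq[of \<Psi>, OF \<Psi>0 c] module.scale_sum_right[OF assms(1)] ..
  finally show "Fsum_map Fi H \<Psi> (scale r x) = sX r (Fsum_map Fi H \<Psi> x)" .
  let ?c = "\<lambda>i. if i \<in> S then c i else 0" and ?e = "\<lambda>i. if i \<in> T then e i else 0"
  have pc: "Fsum_repr Fi H (S \<union> T) ?c x" and pe: "Fsum_repr Fi H (S \<union> T) ?e y"
    using Fsum_repr_common[OF c e zero_Fi] by blast+
  have "Fsum_map Fi H \<Psi> (x + y) = (\<Sum>i\<in>S \<union> T. \<Psi> i (?c i + ?e i))"
    using Fsum_map_eq[of \<Psi>, OF \<Psi>0 Fsum_repr_add[OF subspace_Fi_all pc pe]] .
  also have "\<dots> = (\<Sum>i\<in>S \<union> T. \<Psi> i (?c i) + \<Psi> i (?e i))"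
  proof (rule sum.cong[OF refl])
    fix i assume "i \<in> S \<union> T"
    then have "lin_on scale sX (Fi i) X (\<Psi> i)" "?c i \<in> Fi i" "?e i \<in> Fi i"
      using \<Psi> Fsum_reprD[OF pc] Fsum_reprD[OF pe] by blast+
    then show "\<Psi> i (?c i + ?e i) = \<Psi> i (?c i) + \<Psi> i (?e i)" by (rule lin_on_add)
  qed
  also have "\<dots> = Fsum_map Fi H \<Psi> x + Fsum_map Fi H \<Psi> y"
    unfolding Fsum_map_eq[of \<Psi>, OF \<Psi>0 pc] Fsum_map_eq[of \<Psi>, OF \<Psi>0 pe] sum.distrib ..
  finally show "Fsum_map Fi H \<Psi> (x + y) = Fsum_map Fi H \<Psi> x + Fsum_map Fi H \<Psi> y" .
qed

lemma Fsum_map_lifts: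
  assumes "module sX" "module.subspace sX X" "lin_on sX sY X Y p"
    and \<phi>: "lin_on scale sY (Fsum Fi H) Y \<phi>"
    and \<Psi>: "\<forall>i\<in>H. lin_on scale sX (Fi i) X (\<Psi> i) \<and> (\<forall>a\<in>Fi i. p (\<Psi> i a) = \<phi> a)"
    and a: "a \<in> Fsum Fi H"
  shows "p (Fsum_map Fi H \<Psi> a) = \<phi> a"
proof -
  have \<Psi>0: "\<forall>i\<in>H. \<Psi> i 0 = 0"
    using \<Psi> zero_Fi lin_on_zero[of scale sX "Fi i" X "\<Psi> i" for i] by blast
  obtain S c where c: "Fsum_repr Fi H S c a" using a by (auto simp: Fsum_iff_repr)
  then have fin: "finite S" and a_eq: "a = sum c S"
    by (simp_all add: Fsum_repr_def)
  have \<Psi>i: "lin_on scale sX (Fi i) X (\<Psi> i)" "c i \<in> Fi i" "p (\<Psi> i (c i)) = \<phi> (c i)"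
    if "i \<in> S" for i
  proof -
    from Fsum_reprD[OF c that] have "i \<in> H" "c i \<in> Fi i" by simp_all
    with \<Psi> show "lin_on scale sX (Fi i) X (\<Psi> i)" "c i \<in> Fi i" "p (\<Psi> i (c i)) = \<phi> (c i)"
      by simp_all
  qed
  have "\<forall>i\<in>S. \<Psi> i (c i) \<in> X"
    using lin_on_mem[OF \<Psi>i(1,2)] by simp
  then have "p (Fsum_map Fi H \<Psi> a) = (\<Sum>i\<in>S. p (\<Psi> i (c i)))"
    unfolding Fsum_map_eq[of \<Psi>, OF \<Psi>0 c] by (rule module.lin_on_sum[OF assms(1,2,3) fin])
  also have "\<dots> = (\<Sum>i\<in>S. \<phi> (c i))"
    using \<Psi>i(3) by (rule sum.cong[OF refl])
  also have "\<dots> = \<phi> a"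
  proof -
    have "\<forall>i\<in>S. c i \<in> Fsum Fi H"
      using Fsum_reprD[OF c] Fi_subset_Fsum[of _ H Fi] by blast
    then show ?thesis
      unfolding a_eq by (rule lin_on_sum[OF subspace_Fsum_family \<phi> fin, symmetric])
  qed
  finally show ?thesis .
qed

lemma projective_Fsum:
  assumes "\<forall>i\<in>H. projective TYPE('x::ab_group_add) TYPE('y::ab_group_add) scale (Fi i)"
  shows "projective TYPE('x) TYPE('y) scale (Fsum Fi H)"
  unfolding projective_def
proof (intro allI impI)
  fix sX :: "'r \<Rightarrow> 'x \<Rightarrow> 'x" and sY :: "'r \<Rightarrow> 'y \<Rightarrow> 'y" and X Y p \<phi>
  assume A: "module sX \<and> module sY \<and> module.subspace sX X \<and> module.subspace sY Y \<and>
        lin_on sX sY X Y p \<and> p ` X = Y \<and> lin_on scale sY (Fsum Fi H) Y \<phi>"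
  then have X: "module sX" "module.subspace sX X" "lin_on sX sY X Y p"
    and \<phi>: "lin_on scale sY (Fsum Fi H) Y \<phi>"
    by auto
  have "\<exists>\<psi>. lin_on scale sX (Fi i) X \<psi> \<and> (\<forall>a\<in>Fi i. p (\<psi> a) = \<phi> a)" if i: "i \<in> H" for i
  proof -
    have "lin_on scale sY (Fi i) Y \<phi>"
      using \<phi> Fi_subset_Fsum[OF i] unfolding lin_on_def by blast
    then show ?thesis
      using assms i A unfolding projective_def by blast
  qed
  then obtain \<Psi> where \<Psi>: "\<forall>i\<in>H. lin_on scale sX (Fi i) X (\<Psi> i) \<and> (\<forall>a\<in>Fi i. p (\<Psi> i a) = \<phi> a)"
    by metis
  show "\<exists>\<psi>. lin_on scale sX (Fsum Fi H) X \<psi> \<and> (\<forall>a\<in>Fsum Fi H. p (\<psi> a) = \<phi> a)"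
  proof (intro exI conjI ballI)
    show "lin_on scale sX (Fsum Fi H) X (Fsum_map Fi H \<Psi>)"
      using \<Psi> by (intro lin_on_Fsum_map[OF X(1,2)]) blast
    show "p (Fsum_map Fi H \<Psi> a) = \<phi> a" if "a \<in> Fsum Fi H" for a
      using Fsum_map_lifts[OF X \<phi> \<Psi> that] .
  qed
qed

end

lemma exact_ses_restrict:
  assumes "exact_ses sP sF sM UNIV UNIV UNIV f g"
  shows "exact_ses sP sF sM (Psub f g Fi H) (Fsum Fi H) (Msub g Fi H) f g"
  using assms unfolding exact_ses_def lin_on_def Psub_def Msub_def
  by (auto simp: inj_on_def image_vimage_eq)

lemma w_split_via_restrict:
  assumes "w_split_via sP sF sM UNIV UNIV UNIV f g n d h"
    and "\<forall>k<n. h k ` Msub g Fi H \<subseteq> Fsum Fi H"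
  shows "w_split_via sP sF sM (Psub f g Fi H) (Fsum Fi H) (Msub g Fi H) f g n d h"
  using assms exact_ses_restrict unfolding w_split_via_def lin_on_def
  by (auto simp: image_subset_iff)

theorem lemma3p1:
  fixes sP :: "'r::comm_ring_1 \<Rightarrow> 'p::ab_group_add \<Rightarrow> 'p"
    and sF :: "'r \<Rightarrow> 'f::ab_group_add \<Rightarrow> 'f"
    and sM :: "'r \<Rightarrow> 'm::ab_group_add \<Rightarrow> 'm"
    and f :: "'p \<Rightarrow> 'f" and g :: "'f \<Rightarrow> 'm"
    and n :: nat and d :: "nat \<Rightarrow> 'r" and h :: "nat \<Rightarrow> 'm \<Rightarrow> 'f"
    and Fi :: "'i \<Rightarrow> 'f set" and I :: "'i set"
    and S1 :: "'i set set"
  assumes modP: "module sP" and modF: "module sF" and modM: "module sM"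
    and wsplit: "w_split_via sP sF sM UNIV UNIV UNIV f g n d h"
    and dsum: "internal_direct_sum sF Fi I"
    and proj: "\<forall>i\<in>I. projective TYPE('x::ab_group_add) TYPE('y::ab_group_add) sF (Fi i)"
    and S1_sub: "S1 \<subseteq> Pow I" and S1_ne: "S1 \<noteq> {}"
    and S1_chain: "\<forall>A\<in>S1. \<forall>B\<in>S1. A \<subseteq> B \<or> B \<subseteq> A"
    and S1_inv: "\<forall>Hs\<in>S1. \<forall>k<n. h k ` Msub g Fi Hs \<subseteq> Fsum Fi Hs"
  shows "(\<Union>Hs\<in>S1. Fsum Fi Hs) = Fsum Fi (\<Union>S1)
       \<and> projective TYPE('x) TYPE('y) sF (Fsum Fi (\<Union>S1))
       \<and> (\<Union>Hs\<in>S1. Psub f g Fi Hs) = Psub f g Fi (\<Union>S1)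
       \<and> (\<Union>Hs\<in>S1. Msub g Fi Hs) = Msub g Fi (\<Union>S1)
       \<and> (\<forall>k<n. h k ` Msub g Fi (\<Union>S1) \<subseteq> Fsum Fi (\<Union>S1))
       \<and> w_split_via sP sF sM (Psub f g Fi (\<Union>S1)) (Fsum Fi (\<Union>S1)) (Msub g Fi (\<Union>S1)) f g n d h"
proof -
  let ?H = "\<Union>S1"
  have HI: "?H \<subseteq> I" using S1_sub by blast
  have inv: "\<forall>k<n. h k ` Msub g Fi ?H \<subseteq> Fsum Fi ?H"
  proof (intro allI impI)
    fix k assume "k < n"
    show "h k ` Msub g Fi ?H \<subseteq> Fsum Fi ?H"
      by (rule image_Msub_Union_chain[OF S1_ne S1_chain]) (use S1_inv \<open>k < n\<close> in blast)
  qed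
  have "independent_family sF Fi ?H"
    using independent_family_if_internal_direct_sum[OF modF dsum HI] .
  moreover have "\<forall>i\<in>?H. projective TYPE('x) TYPE('y) sF (Fi i)"
    using proj HI by blast
  ultimately have "projective TYPE('x) TYPE('y) sF (Fsum Fi ?H)"
    by (rule independent_family.projective_Fsum)
  then show ?thesis
    by (intro conjI Fsum_Union_chain[OF S1_ne S1_chain] Psub_Union_chain[OF S1_ne S1_chain]
        Msub_Union_chain[OF S1_ne S1_chain] inv w_split_via_restrict[OF wsplit inv])
qed

end
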